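(* Let $N$ be a Poisson process on $[0,\infty)$ with intensity $\lambda>0$, with points $0<X_1<X_2<\cdots$, and let $\epsilon>0$. Then the family $\{B_i, D_i : i\ge 1\}$ consists of independent random variables; each $D_i$ is exponentially distributed with mean $1/\lambda$, and the random variables $B_i$, $i\ge1$, are identically distributed.
   Context: A cluster is a maximal set of consecutive points $X_j,\dots,X_k$ with $X_{l+1}-X_l\le\epsilon$ for $j\le l<k$. Clusters are numbered from left to right; $A_i$ denotes the first point of the $i$-th cluster and $E_i=X_k+\epsilon$, where $X_k$ is the last point of the $i$-th cluster. The cluster length is $B_i=E_i-A_i$ and the intercluster size is $D_i=A_{i+1}-E_i$. *)

theory Defs
  imports "HOL-Probability.Probability" "HOL-Library.Infinite_Set"
begin

text \<open>Points of the Poisson process built from the interarrival times T 0, T 1, ...: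
  the n-th point (n >= 1) is X_n = T 0 + ... + T (n-1).\<close>
definition pp_point :: "(nat \<Rightarrow> real) \<Rightarrow> nat \<Rightarrow> real" where
  "pp_point T n = (\<Sum>k<n. T k)"

text \<open>Indices k >= 1 such that X_k is the last point of a cluster (gap to next point > eps).\<close>
definition cl_gaps :: "real \<Rightarrow> (nat \<Rightarrow> real) \<Rightarrow> nat set" where
  "cl_gaps eps T = {k. 1 \<le> k \<and> pp_point T (Suc k) - pp_point T k > eps}"

definition cl_last :: "real \<Rightarrow> (nat \<Rightarrow> real) \<Rightarrow> nat \<Rightarrow> nat" where
  "cl_last eps T i = enumerate (cl_gaps eps T) (i - 1)"

definition cl_first :: "real \<Rightarrow> (nat \<Rightarrow> real) \<Rightarrow> nat \<Rightarrow> nat" where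
  "cl_first eps T i = (if i \<le> 1 then 1 else Suc (cl_last eps T (i - 1)))"

definition cl_A :: "real \<Rightarrow> (nat \<Rightarrow> real) \<Rightarrow> nat \<Rightarrow> real" where
  "cl_A eps T i = pp_point T (cl_first eps T i)"

definition cl_E :: "real \<Rightarrow> (nat \<Rightarrow> real) \<Rightarrow> nat \<Rightarrow> real" where
  "cl_E eps T i = pp_point T (cl_last eps T i) + eps"

definition cl_B :: "real \<Rightarrow> (nat \<Rightarrow> real) \<Rightarrow> nat \<Rightarrow> real" where
  "cl_B eps T i = cl_E eps T i - cl_A eps T i"

definition cl_D :: "real \<Rightarrow> (nat \<Rightarrow> real) \<Rightarrow> nat \<Rightarrow> real" where
  "cl_D eps T i = cl_A eps T (Suc i) - cl_E eps T i"

end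

theory Submission
  imports Defs
begin

text \<open>Independence and the identical distribution of the \<open>B\<^sub>i\<close> only need i.i.d. interarrival
  times with \<open>P(T 0 > eps) > 0\<close>. The index of the first gap exceeding \<open>eps\<close> is an almost surely
  finite stopping time; it determines \<open>B\<^sub>1\<close> and \<open>D\<^sub>1\<close>, and the interarrival times after it form a
  fresh copy of the whole sequence, independent of \<open>(B\<^sub>1, D\<^sub>1)\<close>. Summing over the values of the
  stopping time gives \<open>P(B\<^sub>1 \<in> S, D\<^sub>1 \<in> R, tail \<in> F) = \<sigma>(S) \<gamma>(R) P(T \<in> F)\<close>, where
  \<open>\<gamma>(R) = P(T 0 > eps, T 0 - eps \<in> R)\<close>. Iterating yields
  \<open>P(B\<^sub>i \<in> S\<^sub>i, D\<^sub>i \<in> R\<^sub>i for i \<le> n) = \<Prod>\<^sub>i \<sigma>(S\<^sub>i) \<gamma>(R\<^sub>i)\<close>, which contains both claims. In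
  particular each \<open>D\<^sub>i\<close> is distributed as the overshoot \<open>T 0 - eps\<close> given \<open>T 0 > eps\<close>, which for
  exponential interarrival times is exponential again by memorylessness.\<close>

section \<open>Clusters of an interarrival sequence\<close>

lemma pp_point_Suc: "pp_point t (Suc k) = pp_point t k + t k"
  by (simp add: pp_point_def)

lemma cl_gaps_eq: "cl_gaps eps t = {k. 1 \<le> k \<and> eps < t k}"
  by (simp add: cl_gaps_def pp_point_Suc)

lemma enumerate_0_image_add:
  fixes S :: "nat set"
  assumes "S \<noteq> {}"
  shows "enumerate ((\<lambda>x. x + c) ` S) 0 = enumerate S 0 + c"
proof -
  obtain s where "s \<in> S" using assms by blast
  have "(LEAST n. n \<in> (\<lambda>x. x + c) ` S) = (LEAST n. n \<in> S) + c"
  proof (rule Least_equality)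
    show "(LEAST n. n \<in> S) + c \<in> (\<lambda>x. x + c) ` S" using \<open>s \<in> S\<close> by (auto intro: LeastI)
  qed (auto intro: Least_le)
  then show ?thesis by (simp add: enumerate_0)
qed

lemma enumerate_image_add:
  fixes S :: "nat set"
  assumes "infinite S"
  shows "enumerate ((\<lambda>x. x + c) ` S) n = enumerate S n + c"
  using assms
proof (induction n arbitrary: S)
  case 0
  then show ?case using enumerate_0_image_add infinite_imp_nonempty by blast
next
  case (Suc n)
  have "S \<noteq> {}" using Suc.prems by auto
  have "enumerate ((\<lambda>x. x + c) ` S) (Suc n) = enumerate ((\<lambda>x. x + c) ` S - {enumerate S 0 + c}) n"
    by (simp add: enumerate_Suc' enumerate_0_image_add[OF \<open>S \<noteq> {}\<close>])
  also have "(\<lambda>x. x + c) ` S - {enumerate S 0 + c} = (\<lambda>x. x + c) ` (S - {enumerate S 0})"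
    by auto
  also have "enumerate \<dots> n = enumerate (S - {enumerate S 0}) n + c"
    using Suc.IH Suc.prems by simp
  finally show ?case by (simp add: enumerate_Suc')
qed

lemma ball_atLeastAtMost_Suc:
  "(\<forall>j\<in>{1..Suc n}. P j) \<longleftrightarrow> P 1 \<and> (\<forall>j\<in>{1..n}. P (Suc j))"
proof -
  have "{1..Suc n} = insert 1 (Suc ` {1..n})"
    by (auto simp: image_iff)
  then show ?thesis by (simp del: image_Suc_atLeastAtMost)
qed

definition shift_seq :: "nat \<Rightarrow> (nat \<Rightarrow> 'a) \<Rightarrow> nat \<Rightarrow> 'a" where
  "shift_seq l t k = (if k = 0 then t 0 else t (l + k))"

text \<open>The interarrival times after the first cluster and the gap closing it. Entry 0 is a
  placeholder: cluster lengths and gaps only depend on the entries with index \<open>\<ge> 1\<close>.\<close>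
definition cl_tail :: "real \<Rightarrow> (nat \<Rightarrow> real) \<Rightarrow> nat \<Rightarrow> real" where
  "cl_tail eps t = shift_seq (enumerate (cl_gaps eps t) 0) t"

lemma enumerate_cl_gaps_ge_1: "infinite (cl_gaps eps t) \<Longrightarrow> 1 \<le> enumerate (cl_gaps eps t) n"
  using enumerate_in_set[of "cl_gaps eps t" n] by (simp add: cl_gaps_eq)

lemma cl_gaps_cl_tail:
  assumes "infinite (cl_gaps eps t)"
  defines "L \<equiv> enumerate (cl_gaps eps t) 0"
  shows "cl_gaps eps t - {L} = (\<lambda>x. x + L) ` cl_gaps eps (cl_tail eps t)"
proof (intro equalityI subsetI)
  have L_le: "L \<le> x" if "x \<in> cl_gaps eps t" for x
    using that unfolding L_def enumerate_0 by (rule Least_le)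
  have tail: "cl_tail eps t k = t (L + k)" if "k \<noteq> 0" for k
    using that by (simp add: cl_tail_def shift_seq_def L_def)
  fix x
  show "x \<in> (\<lambda>x. x + L) ` cl_gaps eps (cl_tail eps t)" if "x \<in> cl_gaps eps t - {L}"
  proof (rule image_eqI)
    have "L < x" using that L_le by force
    then show "x - L \<in> cl_gaps eps (cl_tail eps t)"
      using that tail[of "x - L"] by (auto simp: cl_gaps_eq)
  qed (use that L_le in force)
  show "x \<in> cl_gaps eps t - {L}" if "x \<in> (\<lambda>x. x + L) ` cl_gaps eps (cl_tail eps t)"
    using that tail by (auto simp: cl_gaps_eq add.commute)
qed

lemma infinite_cl_gaps_cl_tail:
  "infinite (cl_gaps eps t) \<Longrightarrow> infinite (cl_gaps eps (cl_tail eps t))"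
  using cl_gaps_cl_tail by (metis finite_imageI infinite_remove)

lemma enumerate_cl_gaps_Suc:
  assumes "infinite (cl_gaps eps t)"
  shows "enumerate (cl_gaps eps t) (Suc n) =
    enumerate (cl_gaps eps (cl_tail eps t)) n + enumerate (cl_gaps eps t) 0"
  unfolding enumerate_Suc' cl_gaps_cl_tail[OF assms]
  using enumerate_image_add[OF infinite_cl_gaps_cl_tail[OF assms]] by simp

lemma cl_last_Suc:
  assumes "infinite (cl_gaps eps t)" and "1 \<le> i"
  shows "cl_last eps t (Suc i) = cl_last eps (cl_tail eps t) i + enumerate (cl_gaps eps t) 0"
proof -
  obtain j where "i = Suc j" using assms(2) by (cases i) auto
  then show ?thesis unfolding cl_last_def using enumerate_cl_gaps_Suc[OF assms(1), of j] by simp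
qed

lemma cl_first_Suc:
  assumes "infinite (cl_gaps eps t)" and "1 \<le> i"
  shows "cl_first eps t (Suc i) = cl_first eps (cl_tail eps t) i + enumerate (cl_gaps eps t) 0"
proof (cases "i = 1")
  case True
  then show ?thesis by (simp add: cl_first_def cl_last_def)
next
  case False
  then show ?thesis using cl_last_Suc[OF assms(1), of "i - 1"] assms(2)
    by (simp add: cl_first_def)
qed

lemma pp_point_shift_seq:
  assumes "1 \<le> a"
  shows "pp_point (shift_seq l t) a = t 0 - pp_point t (Suc l) + pp_point t (a + l)"
  using assms
proof (induction a rule: dec_induct)
  case base
  then show ?case by (simp add: pp_point_def shift_seq_def)
next
  case (step a)
  then show ?case by (simp add: pp_point_Suc shift_seq_def add.commute)
qed

lemma pp_point_cl_tail_diff: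
  assumes "1 \<le> a" and "1 \<le> b"
  shows "pp_point (cl_tail eps t) b - pp_point (cl_tail eps t) a =
    pp_point t (b + enumerate (cl_gaps eps t) 0) - pp_point t (a + enumerate (cl_gaps eps t) 0)"
  using pp_point_shift_seq[OF assms(1)] pp_point_shift_seq[OF assms(2)] by (simp add: cl_tail_def)

lemma cl_first_ge_1: "1 \<le> cl_first eps t i"
  by (simp add: cl_first_def)

lemma cl_last_ge_1: "infinite (cl_gaps eps t) \<Longrightarrow> 1 \<le> cl_last eps t i"
  unfolding cl_last_def by (rule enumerate_cl_gaps_ge_1)

lemma cl_B_Suc:
  assumes "infinite (cl_gaps eps t)" and "1 \<le> i"
  shows "cl_B eps t (Suc i) = cl_B eps (cl_tail eps t) i"
proof -
  let ?u = "cl_tail eps t"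
  have "1 \<le> cl_last eps ?u i" using cl_last_ge_1 infinite_cl_gaps_cl_tail assms(1) by blast
  then show ?thesis
    using pp_point_cl_tail_diff[of "cl_first eps ?u i" "cl_last eps ?u i" eps t, OF cl_first_ge_1]
      cl_last_Suc[OF assms] cl_first_Suc[OF assms]
    by (simp add: cl_B_def cl_A_def cl_E_def)
qed

lemma cl_D_Suc:
  assumes "infinite (cl_gaps eps t)" and "1 \<le> i"
  shows "cl_D eps t (Suc i) = cl_D eps (cl_tail eps t) i"
proof -
  let ?u = "cl_tail eps t"
  have "1 \<le> cl_last eps ?u i" using cl_last_ge_1 infinite_cl_gaps_cl_tail assms(1) by blast
  then show ?thesis
    using pp_point_cl_tail_diff[of "cl_last eps ?u i" "cl_first eps ?u (Suc i)" eps t, OF _ cl_first_ge_1]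
      cl_last_Suc[OF assms] cl_first_Suc[OF assms(1), of "Suc i"] assms(2)
    by (simp add: cl_D_def cl_A_def cl_E_def)
qed

lemma cl_B_D_1:
  assumes "cl_gaps eps t \<noteq> {}"
  defines "L \<equiv> enumerate (cl_gaps eps t) 0"
  shows "cl_B eps t 1 = eps + (\<Sum>k=1..L-1. t k)" and "cl_D eps t 1 = t L - eps"
proof -
  have "L \<in> cl_gaps eps t" unfolding L_def enumerate_0 using assms(1) by (auto intro: LeastI)
  then have "{1..<L} = {1..L-1}" by (auto simp: cl_gaps_eq)
  moreover have "pp_point t L = t 0 + (\<Sum>k\<in>{1..<L}. t k)"
    using \<open>L \<in> cl_gaps eps t\<close>
    unfolding pp_point_def lessThan_atLeast0 by (simp add: cl_gaps_eq sum.atLeast_Suc_lessThan)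
  ultimately show "cl_B eps t 1 = eps + (\<Sum>k=1..L-1. t k)"
    by (simp add: cl_B_def cl_A_def cl_E_def cl_first_def cl_last_def L_def pp_point_def)
  show "cl_D eps t 1 = t L - eps"
    by (simp add: cl_D_def cl_A_def cl_E_def cl_first_def cl_last_def L_def pp_point_Suc)
qed

lemma enumerate_cl_gaps_0_eq_iff:
  assumes "1 \<le> l"
  shows "cl_gaps eps t \<noteq> {} \<and> enumerate (cl_gaps eps t) 0 = l \<longleftrightarrow>
    (\<forall>k\<in>{1..<l}. t k \<le> eps) \<and> eps < t l"
proof
  assume *: "cl_gaps eps t \<noteq> {} \<and> enumerate (cl_gaps eps t) 0 = l"
  then have "l \<in> cl_gaps eps t" unfolding enumerate_0 by (auto intro: LeastI)
  moreover have "t k \<le> eps" if "k \<in> {1..<l}" for k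
    using * that not_less_Least[of k "\<lambda>k. k \<in> cl_gaps eps t"]
    by (auto simp: enumerate_0 cl_gaps_eq)
  ultimately show "(\<forall>k\<in>{1..<l}. t k \<le> eps) \<and> eps < t l" by (simp add: cl_gaps_eq)
next
  assume *: "(\<forall>k\<in>{1..<l}. t k \<le> eps) \<and> eps < t l"
  then have "l \<in> cl_gaps eps t" using assms by (simp add: cl_gaps_eq)
  moreover have "(LEAST k. k \<in> cl_gaps eps t) = l"
  proof (rule Least_equality)
    show "l \<le> y" if "y \<in> cl_gaps eps t" for y
      using * that by (force simp: cl_gaps_eq not_le[symmetric])
  qed fact
  ultimately show "cl_gaps eps t \<noteq> {} \<and> enumerate (cl_gaps eps t) 0 = l"
    by (auto simp: enumerate_0)
qed

definition clusters_set :: "real \<Rightarrow> nat \<Rightarrow> (nat \<Rightarrow> real set) \<Rightarrow> (nat \<Rightarrow> real set) \<Rightarrow> (nat \<Rightarrow> real) set" where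
  "clusters_set eps n S R = {t. \<forall>j\<in>{1..n}. cl_B eps t j \<in> S j \<and> cl_D eps t j \<in> R j}"

lemma first_cluster_at_iff:
  "(\<forall>k\<in>{1..n}. t k \<le> eps) \<and> eps + (\<Sum>k=1..n. t k) \<in> S \<and> eps < t (Suc n) \<and> t (Suc n) - eps \<in> R
      \<and> shift_seq (Suc n) t \<in> F \<longleftrightarrow>
    cl_gaps eps t \<noteq> {} \<and> enumerate (cl_gaps eps t) 0 = Suc n
      \<and> cl_B eps t 1 \<in> S \<and> cl_D eps t 1 \<in> R \<and> cl_tail eps t \<in> F"
proof (cases "cl_gaps eps t \<noteq> {} \<and> enumerate (cl_gaps eps t) 0 = Suc n")
  case True
  then show ?thesis
    using cl_B_D_1[of eps t] enumerate_cl_gaps_0_eq_iff[of "Suc n" eps t] by (auto simp: cl_tail_def)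
next
  case False
  then show ?thesis using enumerate_cl_gaps_0_eq_iff[of "Suc n" eps t] by auto
qed

lemma clusters_set_Suc:
  assumes "infinite (cl_gaps eps t)"
  shows "t \<in> clusters_set eps (Suc n) S R \<longleftrightarrow>
    cl_B eps t 1 \<in> S 1 \<and> cl_D eps t 1 \<in> R 1 \<and>
    cl_tail eps t \<in> clusters_set eps n (\<lambda>j. S (Suc j)) (\<lambda>j. R (Suc j))"
  unfolding clusters_set_def mem_Collect_eq ball_atLeastAtMost_Suc
  using cl_B_Suc[OF assms] cl_D_Suc[OF assms] by simp

section \<open>Measurability\<close>

abbreviation real_seqs :: "(nat \<Rightarrow> real) measure" where
  "real_seqs \<equiv> PiM UNIV (\<lambda>_. borel)"

lemma UNIV_in_sets_real_seqs: "UNIV \<in> sets real_seqs"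
  using sets.top[of real_seqs] by (simp add: space_PiM)

lemma measurable_Least_mem:
  fixes H :: "'b \<Rightarrow> nat set"
  assumes "\<And>k. {x\<in>space N. k \<in> H x} \<in> sets N"
  shows "(\<lambda>x. LEAST k. k \<in> H x) \<in> measurable N (count_space UNIV)"
  by (rule measurable_Least[where P="\<lambda>k x. k \<in> H x"]) (use assms in \<open>simp add: pred_def\<close>)

lemma measurable_enumerate:
  fixes H :: "'b \<Rightarrow> nat set"
  assumes "\<And>k. {x\<in>space N. k \<in> H x} \<in> sets N"
  shows "(\<lambda>x. enumerate (H x) n) \<in> measurable N (count_space UNIV)"
  using assms
proof (induction n arbitrary: H)
  case 0
  then show ?case by (simp add: enumerate_0 measurable_Least_mem)
next
  case (Suc n)
  let ?L = "\<lambda>x. LEAST k. k \<in> H x"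
  have "{x\<in>space N. k \<in> H x - {?L x}} \<in> sets N" for k
  proof -
    have "{x\<in>space N. k \<in> H x - {?L x}} = {x\<in>space N. k \<in> H x} \<inter> (?L -` (UNIV - {k}) \<inter> space N)"
      by auto
    then show ?thesis
      using Suc.prems measurable_sets[OF measurable_Least_mem[OF Suc.prems], of "UNIV - {k}"] by auto
  qed
  from Suc.IH[OF this] show ?case by (simp add: enumerate_Suc)
qed

context
  fixes N :: "'b measure" and t :: "'b \<Rightarrow> nat \<Rightarrow> real" and eps :: real
  assumes measurable_t: "\<And>k. (\<lambda>x. t x k) \<in> borel_measurable N"
begin

lemma measurable_enumerate_cl_gaps:
  "(\<lambda>x. enumerate (cl_gaps eps (t x)) n) \<in> measurable N (count_space UNIV)"
  by (rule measurable_enumerate) (use measurable_t in \<open>simp add: cl_gaps_eq\<close>)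

lemma measurable_cl_first: "(\<lambda>x. cl_first eps (t x) i) \<in> measurable N (count_space UNIV)"
  unfolding cl_first_def cl_last_def using measurable_enumerate_cl_gaps by simp

lemma borel_measurable_pp_point:
  assumes "g \<in> measurable N (count_space UNIV)"
  shows "(\<lambda>x. pp_point (t x) (g x)) \<in> borel_measurable N"
proof (rule measurable_compose_countable'[where I=UNIV, OF _ assms])
  fix i :: nat
  show "(\<lambda>x. pp_point (t x) i) \<in> borel_measurable N"
    unfolding pp_point_def using measurable_t by measurable
qed simp

lemma borel_measurable_cl_B: "(\<lambda>x. cl_B eps (t x) i) \<in> borel_measurable N"
  unfolding cl_B_def cl_A_def cl_E_def cl_last_def
  using borel_measurable_pp_point[OF measurable_enumerate_cl_gaps]
    borel_measurable_pp_point[OF measurable_cl_first]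
  by measurable

lemma borel_measurable_cl_D: "(\<lambda>x. cl_D eps (t x) i) \<in> borel_measurable N"
  unfolding cl_D_def cl_A_def cl_E_def cl_last_def
  using borel_measurable_pp_point[OF measurable_enumerate_cl_gaps]
    borel_measurable_pp_point[OF measurable_cl_first]
  by measurable

lemma measurable_cl_tail:
  "(\<lambda>x. cl_tail eps (t x)) \<in> measurable N real_seqs"
proof (rule measurable_PiM_single')
  fix k :: nat
  show "(\<lambda>x. cl_tail eps (t x) k) \<in> borel_measurable N"
  proof (cases "k = 0")
    case False
    have "(\<lambda>x. t x (enumerate (cl_gaps eps (t x)) 0 + k)) \<in> borel_measurable N"
      by (rule measurable_compose_countable'[where I=UNIV, OF _ measurable_enumerate_cl_gaps])
        (use measurable_t in auto)
    then show ?thesis using False by (simp add: cl_tail_def shift_seq_def)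
  qed (use measurable_t in \<open>simp add: cl_tail_def shift_seq_def\<close>)
qed (simp add: space_PiM)

end

lemma measurable_shift_seq:
  assumes "0 \<in> K" and "\<And>k. 1 \<le> k \<Longrightarrow> l + k \<in> K"
  shows "shift_seq l \<in> measurable (PiM K (\<lambda>_. borel)) real_seqs"
proof -
  have "(\<lambda>x. shift_seq l x k) \<in> borel_measurable (PiM K (\<lambda>_. borel))" for k
    using assms by (cases "k = 0") (auto simp: shift_seq_def)
  then have "(\<lambda>x k. shift_seq l x k) \<in> measurable (PiM K (\<lambda>_. borel)) real_seqs"
    by (intro measurable_PiM_single') (auto simp: space_PiM)
  then show ?thesis by simp
qed

lemma sets_clusters_set:
  assumes "\<And>j. S j \<in> sets borel" and "\<And>j. R j \<in> sets borel"
  shows "clusters_set eps n S R \<in> sets real_seqs"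
proof -
  have [measurable]:
    "(\<lambda>t. cl_B eps t j) \<in> borel_measurable real_seqs"
    "(\<lambda>t. cl_D eps t j) \<in> borel_measurable real_seqs" for j
    by (rule borel_measurable_cl_B borel_measurable_cl_D, simp)+
  note [measurable] = assms
  have "clusters_set eps n S R = {t\<in>space real_seqs. \<forall>j\<in>{1..n}. cl_B eps t j \<in> S j \<and> cl_D eps t j \<in> R j}"
    by (auto simp: clusters_set_def space_PiM)
  also have "\<dots> \<in> sets real_seqs"
    by measurable
  finally show ?thesis .
qed

section \<open>Independent random sequences\<close>

lemma (in prob_space) indep_vars_reindex:
  assumes "indep_vars M' X I" and "inj_on f J" and "f ` J \<subseteq> I"
  shows "indep_vars (\<lambda>j. M' (f j)) (\<lambda>j. X (f j)) J"
proof -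
  have "indep_vars (\<lambda>j. PiM {f j} M') (\<lambda>j \<omega>. restrict (\<lambda>i. X i \<omega>) {f j}) J"
    using assms by (intro indep_vars_restrict) (auto simp: disjoint_family_on_def inj_on_eq_iff)
  then have "indep_vars (\<lambda>j. M' (f j)) (\<lambda>j. (\<lambda>x. x (f j)) \<circ> (\<lambda>\<omega>. restrict (\<lambda>i. X i \<omega>) {f j})) J"
    by (rule indep_vars_compose) simp
  then show ?thesis by (simp add: comp_def)
qed

lemma (in prob_space) distr_iid_seq:
  assumes "indep_vars (\<lambda>_. borel) X UNIV" and "\<And>k. distr M borel (X k) = D"
  shows "distr M real_seqs (\<lambda>\<omega> k. X k \<omega>) = PiM UNIV (\<lambda>_. D)"
proof -
  have "distr M real_seqs (\<lambda>\<omega> k. X k \<omega>) = PiM UNIV (\<lambda>k. distr M borel (X k))"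
    using iffD1[OF indep_vars_iff_distr_eq_PiM[where I=UNIV and M'="\<lambda>_. borel"] assms(1)]
      assms(1) by (simp add: restrict_UNIV indep_vars_def)
  also have "\<dots> = PiM UNIV (\<lambda>_. D)"
    by (intro PiM_cong refl assms(2))
  finally show ?thesis .
qed

lemma (in prob_space) indep_vars_finite_index:
  assumes "\<And>J. J \<subseteq> I \<Longrightarrow> J \<noteq> {} \<Longrightarrow> finite J \<Longrightarrow> indep_vars M' X J"
  shows "indep_vars M' X I"
  unfolding indep_vars_def2
proof
  show "\<forall>i\<in>I. random_variable (M' i) (X i)"
    using assms[of "{_}"] by (auto simp: indep_vars_def2)
  show "indep_sets (\<lambda>i. {X i -` A \<inter> space M |A. A \<in> sets (M' i)}) I"
    using assms by (subst indep_sets_finite_index_sets) (auto simp: indep_vars_def2)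
qed

lemma (in prob_space) distr_eq_iff_prob_eq:
  assumes "X \<in> measurable M N" and "Y \<in> measurable M N"
  shows "distr M N X = distr M N Y \<longleftrightarrow>
    (\<forall>A\<in>sets N. prob {\<omega>\<in>space M. X \<omega> \<in> A} = prob {\<omega>\<in>space M. Y \<omega> \<in> A})"
proof -
  have prob_eq: "prob {\<omega>\<in>space M. Z \<omega> \<in> A} = measure (distr M N Z) A"
    if "Z \<in> measurable M N" "A \<in> sets N" for Z A
    using that by (simp add: measure_distr vimage_def Int_def conj_commute)
  show ?thesis
  proof
    assume "\<forall>A\<in>sets N. prob {\<omega>\<in>space M. X \<omega> \<in> A} = prob {\<omega>\<in>space M. Y \<omega> \<in> A}"
    then show "distr M N X = distr M N Y"
      using assms by (intro measure_eqI) (auto simp: emeasure_distr emeasure_eq_measure vimage_def Int_def conj_commute)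
  qed (use assms prob_eq in simp)
qed

section \<open>I.i.d. interarrival times\<close>

locale cluster_process = prob_space M for M :: "'a measure" +
  fixes T :: "nat \<Rightarrow> 'a \<Rightarrow> real" and eps :: real
  assumes identically_distributed: "\<And>k. distr M borel (T k) = distr M borel (T 0)"
    and indep: "indep_vars (\<lambda>_. borel) T UNIV"
    and prob_long_gap_pos: "prob {\<omega>\<in>space M. eps < T 0 \<omega>} > 0"
begin

abbreviation T_seq :: "'a \<Rightarrow> nat \<Rightarrow> real" where
  "T_seq \<omega> \<equiv> \<lambda>k. T k \<omega>"

lemma measurable_T [measurable]: "T k \<in> borel_measurable M"
  using indep by (auto simp: indep_vars_def)

lemma measurable_T_seq [measurable]: "T_seq \<in> measurable M real_seqs"
  by (rule measurable_PiM_single') auto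

lemma sets_Collect_T_seq: "A \<in> sets real_seqs \<Longrightarrow> {\<omega>\<in>space M. T_seq \<omega> \<in> A} \<in> sets M"
  using measurable_sets[OF measurable_T_seq] by (simp add: vimage_def Int_def conj_commute)

lemma prob_T_eq: "A \<in> sets borel \<Longrightarrow> prob {\<omega>\<in>space M. T k \<omega> \<in> A} = prob {\<omega>\<in>space M. T 0 \<omega> \<in> A}"
  using identically_distributed[of k] distr_eq_iff_prob_eq[of "T k" borel "T 0"] by simp

lemma prob_T_seq_reindex:
  assumes "inj f" and F: "F \<in> sets real_seqs"
  shows "prob {\<omega>\<in>space M. (\<lambda>k. T (f k) \<omega>) \<in> F} = prob {\<omega>\<in>space M. T_seq \<omega> \<in> F}"
proof -
  have "indep_vars (\<lambda>_. borel) (\<lambda>k. T (f k)) UNIV"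
    using indep_vars_reindex[OF indep] assms(1) by simp
  then have "distr M real_seqs (\<lambda>\<omega> k. T (f k) \<omega>) = distr M real_seqs T_seq"
    using distr_iid_seq[OF _ identically_distributed] distr_iid_seq[OF indep identically_distributed]
    by simp
  moreover have "(\<lambda>\<omega> k. T (f k) \<omega>) \<in> measurable M real_seqs"
    by (rule measurable_PiM_single') auto
  ultimately show ?thesis
    using F distr_eq_iff_prob_eq[of "\<lambda>\<omega> k. T (f k) \<omega>" real_seqs T_seq] by simp
qed

lemma prob_restrict_indep:
  assumes "K1 \<inter> K2 = {}"
    and "P1 \<in> sets (PiM K1 (\<lambda>_. borel))" and "P2 \<in> sets (PiM K2 (\<lambda>_. borel))"
  shows "prob {\<omega>\<in>space M. restrict (T_seq \<omega>) K1 \<in> P1 \<and> restrict (T_seq \<omega>) K2 \<in> P2}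
       = prob {\<omega>\<in>space M. restrict (T_seq \<omega>) K1 \<in> P1} * prob {\<omega>\<in>space M. restrict (T_seq \<omega>) K2 \<in> P2}"
  using indep_varD[OF indep_var_restrict[OF indep assms(1)] assms(2,3)]
  by (simp add: vimage_def Int_def conj_commute)

lemma prob_short_block:
  "prob {\<omega>\<in>space M. \<forall>k\<in>{N..<N+m}. T k \<omega> \<le> eps} = prob {\<omega>\<in>space M. T 0 \<omega> \<le> eps} ^ m"
proof (cases "m = 0")
  case False
  have "prob (\<Inter>k\<in>{N..<N+m}. T k -` {..eps} \<inter> space M) = (\<Prod>k\<in>{N..<N+m}. prob (T k -` {..eps} \<inter> space M))"
    using False by (intro indep_varsD[OF indep]) auto
  moreover have "(\<Inter>k\<in>{N..<N+m}. T k -` {..eps} \<inter> space M) = {\<omega>\<in>space M. \<forall>k\<in>{N..<N+m}. T k \<omega> \<le> eps}"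
    using False by auto
  moreover have "prob (T k -` {..eps} \<inter> space M) = prob {\<omega>\<in>space M. T 0 \<omega> \<le> eps}" for k
    using prob_T_eq[of "{..eps}" k] by (simp add: vimage_def Int_def conj_commute)
  ultimately show ?thesis by simp
qed (simp add: prob_space)

lemma prob_short_forever: "prob {\<omega>\<in>space M. \<forall>k\<ge>N. T k \<omega> \<le> eps} = 0"
proof -
  let ?q = "prob {\<omega>\<in>space M. T 0 \<omega> \<le> eps}"
  have "{\<omega>\<in>space M. T 0 \<omega> \<le> eps} = space M - {\<omega>\<in>space M. eps < T 0 \<omega>}"
    by auto
  then have "?q = 1 - prob {\<omega>\<in>space M. eps < T 0 \<omega>}"
    by (simp add: prob_compl)
  then have "?q < 1" using prob_long_gap_pos by simp
  then have "(\<lambda>m. ?q ^ m) \<longlonglongrightarrow> 0" by (intro LIMSEQ_power_zero) auto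
  moreover have "prob {\<omega>\<in>space M. \<forall>k\<ge>N. T k \<omega> \<le> eps} \<le> ?q ^ m" for m
  proof -
    have "prob {\<omega>\<in>space M. \<forall>k\<ge>N. T k \<omega> \<le> eps} \<le> prob {\<omega>\<in>space M. \<forall>k\<in>{N..<N+m}. T k \<omega> \<le> eps}"
      by (rule finite_measure_mono) auto
    then show ?thesis by (simp add: prob_short_block)
  qed
  ultimately have "prob {\<omega>\<in>space M. \<forall>k\<ge>N. T k \<omega> \<le> eps} \<le> 0"
    by (intro LIMSEQ_le_const) auto
  then show ?thesis using measure_nonneg[of M] by (simp add: order_antisym)
qed

lemma AE_infinite_cl_gaps: "AE \<omega> in M. infinite (cl_gaps eps (T_seq \<omega>))"
proof -
  have "AE \<omega> in M. \<exists>k\<ge>N. eps < T k \<omega>" for N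
  proof (rule AE_I[where N="{\<omega>\<in>space M. \<forall>k\<ge>N. T k \<omega> \<le> eps}"])
    show "emeasure M {\<omega>\<in>space M. \<forall>k\<ge>N. T k \<omega> \<le> eps} = 0"
      using prob_short_forever by (simp add: emeasure_eq_measure)
  qed (auto simp: not_less)
  then have "AE \<omega> in M. \<forall>N. \<exists>k\<ge>N. eps < T k \<omega>"
    by (simp add: AE_all_countable)
  then show ?thesis
  proof (rule AE_mp, intro AE_I2 impI)
    fix \<omega> assume "\<forall>N. \<exists>k\<ge>N. eps < T k \<omega>"
    then show "infinite (cl_gaps eps (T_seq \<omega>))"
      unfolding cl_gaps_eq infinite_nat_iff_unbounded_le
      by (metis (mono_tags, lifting) max.boundedE mem_Collect_eq)
  qed
qed

text \<open>\<open>cluster_weight\<close> and \<open>gap_prob\<close> are \<open>\<sigma>\<close> and \<open>\<gamma>\<close> above. In \<open>block_prob n S\<close> the first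
  cluster has \<open>n + 1\<close> points and length in \<open>S\<close>; the long gap \<open>T (Suc n)\<close> closing it is left out.\<close>
definition block_prob :: "nat \<Rightarrow> real set \<Rightarrow> real" where
  "block_prob n S = prob {\<omega>\<in>space M. (\<forall>k\<in>{1..n}. T k \<omega> \<le> eps) \<and> eps + (\<Sum>k=1..n. T k \<omega>) \<in> S}"

definition gap_prob :: "real set \<Rightarrow> real" where
  "gap_prob R = prob {\<omega>\<in>space M. eps < T 0 \<omega> \<and> T 0 \<omega> - eps \<in> R}"

definition cluster_weight :: "real set \<Rightarrow> real" where
  "cluster_weight S = (\<Sum>n. block_prob n S)"

lemma gap_prob_UNIV_pos: "gap_prob UNIV > 0"
  using prob_long_gap_pos by (simp add: gap_prob_def)

lemma prob_block_then_gap: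
  assumes S: "S \<in> sets borel" and R: "R \<in> sets borel"
  shows "prob {\<omega>\<in>space M. (\<forall>k\<in>{1..n}. T k \<omega> \<le> eps) \<and> eps + (\<Sum>k=1..n. T k \<omega>) \<in> S
      \<and> eps < T (Suc n) \<omega> \<and> T (Suc n) \<omega> - eps \<in> R} = block_prob n S * gap_prob R"
proof -
  note [measurable] = S R
  define P1 where "P1 = {x\<in>space (PiM {1..n} (\<lambda>_. borel)). (\<forall>k\<in>{1..n}. x k \<le> eps) \<and> eps + (\<Sum>k=1..n. x k) \<in> S}"
  define P2 where "P2 = {x\<in>space (PiM {Suc n} (\<lambda>_. borel)). eps < x (Suc n) \<and> x (Suc n) - eps \<in> R}"
  have "P1 \<in> sets (PiM {1..n} (\<lambda>_. borel))" "P2 \<in> sets (PiM {Suc n} (\<lambda>_. borel))"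
    unfolding P1_def P2_def by measurable
  from prob_restrict_indep[OF _ this]
  have "prob {\<omega>\<in>space M. restrict (T_seq \<omega>) {1..n} \<in> P1 \<and> restrict (T_seq \<omega>) {Suc n} \<in> P2}
     = prob {\<omega>\<in>space M. restrict (T_seq \<omega>) {1..n} \<in> P1} * prob {\<omega>\<in>space M. restrict (T_seq \<omega>) {Suc n} \<in> P2}"
    by simp
  moreover have "prob {\<omega>\<in>space M. restrict (T_seq \<omega>) {Suc n} \<in> P2} = gap_prob R"
    using prob_T_eq[of "{x. eps < x \<and> x - eps \<in> R}" "Suc n"]
    by (simp add: gap_prob_def P2_def space_PiM)
  ultimately show ?thesis
    by (simp add: block_prob_def P1_def P2_def space_PiM)
qed

lemma prob_first_cluster_at:
  assumes S: "S \<in> sets borel" and R: "R \<in> sets borel" and F: "F \<in> sets real_seqs"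
  shows "prob {\<omega>\<in>space M. ((\<forall>k\<in>{1..n}. T k \<omega> \<le> eps) \<and> eps + (\<Sum>k=1..n. T k \<omega>) \<in> S
      \<and> eps < T (Suc n) \<omega> \<and> T (Suc n) \<omega> - eps \<in> R) \<and> shift_seq (Suc n) (T_seq \<omega>) \<in> F}
    = block_prob n S * gap_prob R * prob {\<omega>\<in>space M. T_seq \<omega> \<in> F}"
proof -
  note [measurable] = S R F
  define K where "K = {1..Suc n}"
  define P1 where "P1 = {x\<in>space (PiM K (\<lambda>_. borel)). (\<forall>k\<in>{1..n}. x k \<le> eps) \<and> eps + (\<Sum>k=1..n. x k) \<in> S
      \<and> eps < x (Suc n) \<and> x (Suc n) - eps \<in> R}"
  define P2 where "P2 = shift_seq (Suc n) -` F \<inter> space (PiM (- K) (\<lambda>_. borel))"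
  have P1_sets: "P1 \<in> sets (PiM K (\<lambda>_. borel))"
    unfolding P1_def K_def by measurable
  have P2_sets: "P2 \<in> sets (PiM (- K) (\<lambda>_. borel))"
    unfolding P2_def by (rule measurable_sets[OF measurable_shift_seq F]) (auto simp: K_def)
  have "prob {\<omega>\<in>space M. restrict (T_seq \<omega>) K \<in> P1 \<and> restrict (T_seq \<omega>) (- K) \<in> P2}
     = prob {\<omega>\<in>space M. restrict (T_seq \<omega>) K \<in> P1} * prob {\<omega>\<in>space M. restrict (T_seq \<omega>) (- K) \<in> P2}"
    by (rule prob_restrict_indep[OF _ P1_sets P2_sets]) simp
  moreover have "restrict (T_seq \<omega>) K \<in> P1 \<longleftrightarrow> (\<forall>k\<in>{1..n}. T k \<omega> \<le> eps) \<and> eps + (\<Sum>k=1..n. T k \<omega>) \<in> S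
      \<and> eps < T (Suc n) \<omega> \<and> T (Suc n) \<omega> - eps \<in> R" for \<omega>
    by (auto simp: P1_def K_def space_PiM)
  moreover have "restrict (T_seq \<omega>) (- K) \<in> P2 \<longleftrightarrow> shift_seq (Suc n) (T_seq \<omega>) \<in> F" for \<omega>
  proof -
    have "shift_seq (Suc n) (restrict (T_seq \<omega>) (- K)) = shift_seq (Suc n) (T_seq \<omega>)"
      by (auto simp: shift_seq_def K_def fun_eq_iff)
    then show ?thesis by (auto simp: P2_def space_PiM)
  qed
  moreover have "prob {\<omega>\<in>space M. shift_seq (Suc n) (T_seq \<omega>) \<in> F} = prob {\<omega>\<in>space M. T_seq \<omega> \<in> F}"
  proof -
    define f where "f k = (if k = 0 then 0 else Suc n + k)" for k
    have "inj f" unfolding f_def inj_def by auto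
    moreover have "shift_seq (Suc n) (T_seq \<omega>) = (\<lambda>k. T (f k) \<omega>)" for \<omega>
      by (auto simp: shift_seq_def f_def fun_eq_iff)
    ultimately show ?thesis using prob_T_seq_reindex[OF _ F, of f] by simp
  qed
  ultimately show ?thesis
    using prob_block_then_gap[OF S R, of n] by simp
qed

definition first_cluster_event :: "real set \<Rightarrow> real set \<Rightarrow> (nat \<Rightarrow> real) set \<Rightarrow> 'a set" where
  "first_cluster_event S R F = {\<omega>\<in>space M. cl_B eps (T_seq \<omega>) 1 \<in> S \<and> cl_D eps (T_seq \<omega>) 1 \<in> R
     \<and> cl_tail eps (T_seq \<omega>) \<in> F}"

lemma sets_first_cluster_event:
  assumes "S \<in> sets borel" and "R \<in> sets borel" and "F \<in> sets real_seqs"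
  shows "first_cluster_event S R F \<in> sets M"
proof -
  have [measurable]: "(\<lambda>\<omega>. cl_B eps (T_seq \<omega>) 1) \<in> borel_measurable M"
    "(\<lambda>\<omega>. cl_D eps (T_seq \<omega>) 1) \<in> borel_measurable M"
    "(\<lambda>\<omega>. cl_tail eps (T_seq \<omega>)) \<in> measurable M real_seqs"
    by (rule borel_measurable_cl_B borel_measurable_cl_D measurable_cl_tail, simp)+
  note [measurable] = assms
  show ?thesis unfolding first_cluster_event_def by measurable
qed

text \<open>Splitting according to the position of the first long gap, which is a stopping time:
  after it the interarrival times start afresh.\<close>
lemma first_cluster_event_sums:
  assumes S: "S \<in> sets borel" and R: "R \<in> sets borel" and F: "F \<in> sets real_seqs"
  shows "(\<lambda>n. block_prob n S * gap_prob R * prob {\<omega>\<in>space M. T_seq \<omega> \<in> F})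
    sums prob (first_cluster_event S R F)"
proof -
  note [measurable] = S R F
  define U where "U n = {\<omega>\<in>space M. ((\<forall>k\<in>{1..n}. T k \<omega> \<le> eps) \<and> eps + (\<Sum>k=1..n. T k \<omega>) \<in> S
      \<and> eps < T (Suc n) \<omega> \<and> T (Suc n) \<omega> - eps \<in> R) \<and> shift_seq (Suc n) (T_seq \<omega>) \<in> F}" for n
  have U_sets: "U n \<in> sets M" for n
  proof -
    have [measurable]: "(\<lambda>\<omega>. shift_seq (Suc n) (T_seq \<omega>)) \<in> measurable M real_seqs"
      by (rule measurable_compose[OF measurable_T_seq measurable_shift_seq]) auto
    show ?thesis unfolding U_def by measurable
  qed
  have U_iff: "\<omega> \<in> U n \<longleftrightarrow> \<omega> \<in> first_cluster_event S R F \<and> cl_gaps eps (T_seq \<omega>) \<noteq> {}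
      \<and> enumerate (cl_gaps eps (T_seq \<omega>)) 0 = Suc n" for \<omega> n
    unfolding U_def first_cluster_event_def using first_cluster_at_iff[of n "T_seq \<omega>"] by auto
  have "(\<lambda>n. prob (U n)) sums prob (\<Union>n. U n)"
    using U_sets U_iff by (intro finite_measure_UNION) (auto simp: disjoint_family_on_def)
  moreover have "prob (\<Union>n. U n) = prob (first_cluster_event S R F)"
  proof (rule measure_eq_AE)
    show "AE \<omega> in M. \<omega> \<in> (\<Union>n. U n) \<longleftrightarrow> \<omega> \<in> first_cluster_event S R F"
    proof (rule AE_mp[OF AE_infinite_cl_gaps], intro AE_I2 impI)
      fix \<omega> assume "infinite (cl_gaps eps (T_seq \<omega>))"
      moreover from this obtain n where "enumerate (cl_gaps eps (T_seq \<omega>)) 0 = Suc n"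
        using enumerate_cl_gaps_ge_1[of eps "T_seq \<omega>" 0] by (metis Suc_le_D One_nat_def)
      ultimately show "\<omega> \<in> (\<Union>n. U n) \<longleftrightarrow> \<omega> \<in> first_cluster_event S R F"
        using U_iff by (metis UNIV_I UN_iff finite.emptyI)
    qed
  qed (use U_sets sets_first_cluster_event[OF S R F] in auto)
  moreover have "prob (U n) = block_prob n S * gap_prob R * prob {\<omega>\<in>space M. T_seq \<omega> \<in> F}" for n
    unfolding U_def by (rule prob_first_cluster_at[OF S R F])
  ultimately show ?thesis by simp
qed

lemma summable_block_prob:
  assumes "S \<in> sets borel"
  shows "summable (\<lambda>n. block_prob n S)"
proof -
  have "summable (\<lambda>n. block_prob n S * gap_prob UNIV * prob {\<omega>\<in>space M. T_seq \<omega> \<in> UNIV})"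
    using first_cluster_event_sums[OF assms _ UNIV_in_sets_real_seqs, of UNIV] by (auto simp: sums_iff)
  then have "summable (\<lambda>n. block_prob n S * gap_prob UNIV / gap_prob UNIV)"
    by (intro summable_divide) (simp add: prob_space)
  then show ?thesis using gap_prob_UNIV_pos by simp
qed

lemma prob_first_cluster_event:
  assumes "S \<in> sets borel" and "R \<in> sets borel" and "F \<in> sets real_seqs"
  shows "prob (first_cluster_event S R F) = cluster_weight S * gap_prob R * prob {\<omega>\<in>space M. T_seq \<omega> \<in> F}"
proof -
  have "(\<lambda>n. block_prob n S * (gap_prob R * prob {\<omega>\<in>space M. T_seq \<omega> \<in> F}))
      sums (cluster_weight S * (gap_prob R * prob {\<omega>\<in>space M. T_seq \<omega> \<in> F}))"
    unfolding cluster_weight_def by (intro sums_mult2 summable_sums summable_block_prob assms(1))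
  with first_cluster_event_sums[OF assms] show ?thesis
    by (simp add: sums_iff mult.assoc)
qed

lemma cluster_weight_gap_prob_UNIV: "cluster_weight UNIV * gap_prob UNIV = 1"
proof -
  have "first_cluster_event UNIV UNIV UNIV = space M"
    by (auto simp: first_cluster_event_def)
  then show ?thesis
    using prob_first_cluster_event[OF _ _ UNIV_in_sets_real_seqs, of UNIV UNIV] by (simp add: prob_space)
qed

lemma prob_clusters_set:
  assumes "\<And>j. S j \<in> sets borel" and "\<And>j. R j \<in> sets borel"
  shows "prob {\<omega>\<in>space M. T_seq \<omega> \<in> clusters_set eps n S R} =
    (\<Prod>j\<in>{1..n}. cluster_weight (S j) * gap_prob (R j))"
  using assms
proof (induction n arbitrary: S R)
  case 0
  then show ?case by (simp add: clusters_set_def prob_space)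
next
  case (Suc n)
  let ?S' = "\<lambda>j. S (Suc j)" and ?R' = "\<lambda>j. R (Suc j)"
  have sets: "clusters_set eps m (\<lambda>j. S (f j)) (\<lambda>j. R (f j)) \<in> sets real_seqs" for m f
    using Suc.prems by (intro sets_clusters_set)
  have "prob {\<omega>\<in>space M. T_seq \<omega> \<in> clusters_set eps (Suc n) S R}
      = prob (first_cluster_event (S 1) (R 1) (clusters_set eps n ?S' ?R'))"
  proof (rule measure_eq_AE)
    show "AE \<omega> in M. \<omega> \<in> {\<omega>\<in>space M. T_seq \<omega> \<in> clusters_set eps (Suc n) S R}
        \<longleftrightarrow> \<omega> \<in> first_cluster_event (S 1) (R 1) (clusters_set eps n ?S' ?R')"
      by (rule AE_mp[OF AE_infinite_cl_gaps], intro AE_I2 impI)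
        (simp add: first_cluster_event_def clusters_set_Suc)
  qed (use sets[of _ id] sets[of _ Suc] Suc.prems in
       \<open>auto intro: sets_Collect_T_seq sets_first_cluster_event\<close>)
  also have "\<dots> = cluster_weight (S 1) * gap_prob (R 1) *
      prob {\<omega>\<in>space M. T_seq \<omega> \<in> clusters_set eps n ?S' ?R'}"
    using sets[of _ Suc] Suc.prems by (intro prob_first_cluster_event) auto
  also have "prob {\<omega>\<in>space M. T_seq \<omega> \<in> clusters_set eps n ?S' ?R'} =
      (\<Prod>j\<in>{1..n}. cluster_weight (?S' j) * gap_prob (?R' j))"
    using Suc.prems by (intro Suc.IH) auto
  finally show ?case
    by (simp add: prod.atLeast_Suc_atMost prod.shift_bounds_cl_Suc_ivl del: prod.cl_ivl_Suc)
qed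

lemma prob_cl_B:
  assumes "1 \<le> j" and "A \<in> sets borel"
  shows "prob {\<omega>\<in>space M. cl_B eps (T_seq \<omega>) j \<in> A} = cluster_weight A * gap_prob UNIV"
proof -
  define S where "S i = (if i = j then A else UNIV)" for i
  have "{\<omega>\<in>space M. T_seq \<omega> \<in> clusters_set eps j S (\<lambda>_. UNIV)} = {\<omega>\<in>space M. cl_B eps (T_seq \<omega>) j \<in> A}"
    using assms(1) by (auto simp: clusters_set_def S_def)
  moreover have "(\<Prod>i\<in>{1..j}. cluster_weight (S i) * gap_prob UNIV) =
      (\<Prod>i\<in>{1..j}. if i = j then cluster_weight A * gap_prob UNIV else 1)"
    by (rule prod.cong) (auto simp: S_def cluster_weight_gap_prob_UNIV)
  ultimately show ?thesis
    using prob_clusters_set[of S "\<lambda>_. UNIV" j] assms by (simp add: S_def)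
qed

lemma prob_cl_D:
  assumes "1 \<le> j" and "A \<in> sets borel"
  shows "prob {\<omega>\<in>space M. cl_D eps (T_seq \<omega>) j \<in> A} = cluster_weight UNIV * gap_prob A"
proof -
  define R where "R i = (if i = j then A else UNIV)" for i
  have "{\<omega>\<in>space M. T_seq \<omega> \<in> clusters_set eps j (\<lambda>_. UNIV) R} = {\<omega>\<in>space M. cl_D eps (T_seq \<omega>) j \<in> A}"
    using assms(1) by (auto simp: clusters_set_def R_def)
  moreover have "(\<Prod>i\<in>{1..j}. cluster_weight UNIV * gap_prob (R i)) =
      (\<Prod>i\<in>{1..j}. if i = j then cluster_weight UNIV * gap_prob A else 1)"
    by (rule prod.cong) (auto simp: R_def cluster_weight_gap_prob_UNIV)
  ultimately show ?thesis
    using prob_clusters_set[of "\<lambda>_. UNIV" R j] assms by (simp add: R_def)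
qed

lemma distr_cl_B_eq:
  assumes "1 \<le> j"
  shows "distr M borel (\<lambda>\<omega>. cl_B eps (T_seq \<omega>) j) = distr M borel (\<lambda>\<omega>. cl_B eps (T_seq \<omega>) 1)"
  using assms prob_cl_B[of j] prob_cl_B[of 1]
  by (subst distr_eq_iff_prob_eq) (auto intro: borel_measurable_cl_B)

lemma prob_cl_D_cond_prob:
  assumes "1 \<le> j" and "A \<in> sets borel"
  shows "prob {\<omega>\<in>space M. cl_D eps (T_seq \<omega>) j \<in> A} = \<P>(\<omega> in M. T 0 \<omega> - eps \<in> A \<bar> eps < T 0 \<omega>)"
proof -
  have "cluster_weight UNIV = 1 / gap_prob UNIV"
    using cluster_weight_gap_prob_UNIV gap_prob_UNIV_pos by (simp add: field_simps)
  then show ?thesis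
    using prob_cl_D[OF assms] by (simp add: cond_prob_def gap_prob_def conj_commute)
qed

lemma prob_clusters_set_marginals:
  assumes "\<And>j. S j \<in> sets borel" and "\<And>j. R j \<in> sets borel"
  shows "prob {\<omega>\<in>space M. T_seq \<omega> \<in> clusters_set eps n S R} =
    (\<Prod>i\<in>{1..n}. prob {\<omega>\<in>space M. cl_B eps (T_seq \<omega>) i \<in> S i}) *
    (\<Prod>i\<in>{1..n}. prob {\<omega>\<in>space M. cl_D eps (T_seq \<omega>) i \<in> R i})"
proof -
  have factor: "a * r = (a * g) * (c * r)" if "c * g = 1" for a g c r :: real
  proof -
    have "(a * g) * (c * r) = a * r * (c * g)" by (simp add: ac_simps)
    with that show ?thesis by simp
  qed
  have "prob {\<omega>\<in>space M. T_seq \<omega> \<in> clusters_set eps n S R} =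
      (\<Prod>i\<in>{1..n}. cluster_weight (S i) * gap_prob (R i))"
    by (rule prob_clusters_set[OF assms])
  also have "\<dots> = (\<Prod>i\<in>{1..n}. cluster_weight (S i) * gap_prob UNIV) *
      (\<Prod>i\<in>{1..n}. cluster_weight UNIV * gap_prob (R i))"
    unfolding prod.distrib[symmetric]
    by (rule prod.cong[OF refl]) (rule factor[OF cluster_weight_gap_prob_UNIV])
  also have "\<dots> = (\<Prod>i\<in>{1..n}. prob {\<omega>\<in>space M. cl_B eps (T_seq \<omega>) i \<in> S i}) *
      (\<Prod>i\<in>{1..n}. prob {\<omega>\<in>space M. cl_D eps (T_seq \<omega>) i \<in> R i})"
    by (intro arg_cong2[where f="(*)"] prod.cong refl) (simp_all add: prob_cl_B prob_cl_D assms)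
  finally show ?thesis .
qed

lemma indep_vars_cl_B_cl_D_upto:
  assumes "1 \<le> n"
  shows "indep_vars (\<lambda>_. borel)
     (\<lambda>j \<omega>. case j of Inl i \<Rightarrow> cl_B eps (T_seq \<omega>) i | Inr i \<Rightarrow> cl_D eps (T_seq \<omega>) i)
     (Inl ` {1..n} \<union> Inr ` {1..n})"
    (is "indep_vars _ ?X ?W")
proof (subst indep_vars_finite[where E="\<lambda>_. sets borel"])
  show "\<forall>A\<in>\<Pi> i\<in>?W. sets borel.
      prob (\<Inter>j\<in>?W. ?X j -` A j \<inter> space M) = (\<Prod>j\<in>?W. prob (?X j -` A j \<inter> space M))"
  proof
    fix A :: "nat + nat \<Rightarrow> real set" assume A: "A \<in> (\<Pi> i\<in>?W. sets borel)"
    define S where "S i = (if i \<in> {1..n} then A (Inl i) else UNIV)" for i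
    define R where "R i = (if i \<in> {1..n} then A (Inr i) else UNIV)" for i
    have S: "S i \<in> sets borel" and R: "R i \<in> sets borel" for i
      using A by (auto simp: S_def R_def)
    have "(\<Inter>j\<in>?W. ?X j -` A j \<inter> space M) = {\<omega>\<in>space M. T_seq \<omega> \<in> clusters_set eps n S R}"
      using assms by (auto simp: clusters_set_def S_def R_def ball_Un)
    then have "prob (\<Inter>j\<in>?W. ?X j -` A j \<inter> space M) =
        (\<Prod>i\<in>{1..n}. prob {\<omega>\<in>space M. cl_B eps (T_seq \<omega>) i \<in> S i}) *
        (\<Prod>i\<in>{1..n}. prob {\<omega>\<in>space M. cl_D eps (T_seq \<omega>) i \<in> R i})"
      using prob_clusters_set_marginals[OF S R] by simp
    also have "\<dots> = (\<Prod>j\<in>?W. prob (?X j -` A j \<inter> space M))"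
      by (subst prod.union_disjoint)
        (auto simp: prod.reindex S_def R_def vimage_def Int_def conj_commute intro!: prod.cong)
    finally show "prob (\<Inter>j\<in>?W. ?X j -` A j \<inter> space M) = (\<Prod>j\<in>?W. prob (?X j -` A j \<inter> space M))" .
  qed
  show "random_variable borel (?X j)" for j
    by (cases j) (auto intro: borel_measurable_cl_B borel_measurable_cl_D)
qed (use assms in \<open>auto simp: sets.Int_stable sets.space_closed sets.sigma_sets_eq[of borel, simplified]\<close>)

lemma indep_vars_cl_B_cl_D:
  "indep_vars (\<lambda>_. borel)
     (\<lambda>j \<omega>. case j of Inl i \<Rightarrow> cl_B eps (T_seq \<omega>) i | Inr i \<Rightarrow> cl_D eps (T_seq \<omega>) i)
     ({Inl i | i. i \<ge> 1} \<union> {Inr i | i. i \<ge> 1})"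
proof (rule indep_vars_finite_index)
  fix J :: "(nat + nat) set"
  assume J: "J \<subseteq> {Inl i | i. i \<ge> 1} \<union> {Inr i | i. i \<ge> 1}" "J \<noteq> {}" "finite J"
  define n where "n = Max (case_sum id id ` J)"
  have "1 \<le> case_sum id id x \<and> case_sum id id x \<le> n" if "x \<in> J" for x
    using J that unfolding n_def by (auto intro: Max_ge)
  then have "J \<subseteq> Inl ` {1..n} \<union> Inr ` {1..n}" and "1 \<le> n"
    using J(2) by (force split: sum.splits)+
  then show "indep_vars (\<lambda>_. borel)
      (\<lambda>j \<omega>. case j of Inl i \<Rightarrow> cl_B eps (T_seq \<omega>) i | Inr i \<Rightarrow> cl_D eps (T_seq \<omega>) i) J"
    using indep_vars_cl_B_cl_D_upto indep_vars_subset by blast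
qed

end

section \<open>Exponential interarrival times\<close>

lemma (in cluster_process) distributed_cl_D_exponential:
  assumes "distributed M lborel (T 0) (exponential_density lam)" and "lam > 0" and "eps \<ge> 0"
    and "1 \<le> i"
  shows "distributed M lborel (\<lambda>\<omega>. cl_D eps (T_seq \<omega>) i) (exponential_density lam)"
  unfolding exponential_distributed_iff[OF assms(2)]
proof (intro conjI allI impI)
  show D_measurable: "(\<lambda>\<omega>. cl_D eps (T_seq \<omega>) i) \<in> borel_measurable M"
    by (rule borel_measurable_cl_D) simp
  fix a :: real assume "0 \<le> a"
  have "\<P>(\<omega> in M. a < cl_D eps (T_seq \<omega>) i) = \<P>(\<omega> in M. eps + a < T 0 \<omega> \<bar> eps < T 0 \<omega>)"
    using prob_cl_D_cond_prob[OF assms(4), of "{a<..}"] by (simp add: less_diff_eq add.commute)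
  also have "\<dots> = exp (- a * lam)"
    using exponential_distributed_memoryless[OF assms(1) _ assms(2)]
      exponential_distributedD_gt[OF assms(1) _ assms(2)] assms(3) \<open>0 \<le> a\<close> by simp
  finally show "\<P>(\<omega> in M. cl_D eps (T_seq \<omega>) i \<le> a) = 1 - exp (- a * lam)"
    using prob_neg[of "\<lambda>\<omega>. a < cl_D eps (T_seq \<omega>) i"] D_measurable by (simp add: not_less)
qed

theorem corollary1:
  fixes M :: "'a measure" and T :: "nat \<Rightarrow> 'a \<Rightarrow> real" and lam eps :: real
  assumes "prob_space M"
    and "lam > 0" and "eps > 0"
    and "\<And>k. distributed M lborel (T k) (exponential_density lam)"
    and "prob_space.indep_vars M (\<lambda>_. borel) T UNIV"
  shows "prob_space.indep_vars M (\<lambda>_. borel)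
           (\<lambda>j \<omega>. case j of Inl i \<Rightarrow> cl_B eps (\<lambda>k. T k \<omega>) i
                             | Inr i \<Rightarrow> cl_D eps (\<lambda>k. T k \<omega>) i)
           ({Inl i | i. i \<ge> 1} \<union> {Inr i | i. i \<ge> 1})
       \<and> (\<forall>i\<ge>1. distributed M lborel (\<lambda>\<omega>. cl_D eps (\<lambda>k. T k \<omega>) i) (exponential_density lam))
       \<and> (\<forall>i\<ge>1. distr M borel (\<lambda>\<omega>. cl_B eps (\<lambda>k. T k \<omega>) i)
                 = distr M borel (\<lambda>\<omega>. cl_B eps (\<lambda>k. T k \<omega>) 1))"
proof -
  interpret prob_space M by fact
  have "distr M borel (T k) = distr M borel (T 0)" for k
    using assms(4)[of k] assms(4)[of 0]
    by (simp add: distributed_distr_eq_density distr_cong[OF refl sets_lborel[symmetric]])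
  moreover have "\<P>(\<omega> in M. eps < T 0 \<omega>) = exp (- eps * lam)"
    using exponential_distributedD_gt[OF assms(4) _ assms(2)] assms(3) by simp
  ultimately interpret cluster_process M T eps
    using assms(5) by unfold_locales auto
  have "\<forall>i\<ge>1. distributed M lborel (\<lambda>\<omega>. cl_D eps (T_seq \<omega>) i) (exponential_density lam)"
    using distributed_cl_D_exponential[OF assms(4,2)] assms(3) by simp
  then show ?thesis
    using indep_vars_cl_B_cl_D distr_cl_B_eq by blast
qed

end
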